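(* Let $A\in\mathbb{C}^{n\times m}$, $\alpha_1\ge1/\sqrt n$, $\alpha_2\ge1/\sqrt m$, $U=\{u\in\mathbb{C}^n:\|u\|\le\alpha_1,\operatorname{Re}(u)\ge0,\sum_iu_i=1\}$, $V=\{v\in\mathbb{C}^m:\|v\|\le\alpha_2,\operatorname{Re}(v)\ge0,\sum_iv_i=1\}$. Let $\mu_B\in\mathbb{C}^{1\times n}$, $b\in\mathbb{R}$, $\mu_D\in\mathbb{C}^{1\times m}$, $d\in\mathbb{R}$, and let $(\Gamma_B,J_B)$, $(\Gamma_D,J_D)$ be the covariance and pseudo-covariance matrices of complex random row vectors $B\in\mathbb{C}^{1\times n}$, $D\in\mathbb{C}^{1\times m}$. For $p=(p_1,p_2)$ set $$S_1(p_1)=\Big\{u\in U:\operatorname{Re}(\mu_Bu)+k_{p_1}\sqrt{\tfrac12\big(u^H\Gamma_Bu+\operatorname{Re}(u^TJ_Bu)\big)}\le b\Big\},$$ $$S_2(p_2)=\Big\{v\in V:\operatorname{Re}(\mu_Dv)-k_{p_2}\sqrt{\tfrac12\big(v^H\Gamma_Dv+\operatorname{Re}(v^TJ_Dv)\big)}\ge d\Big\},$$ where for each $j$, $k_{p_j}$ and the range of $p_j$ are given by one of the following cases: (i) CES distribution: $p_j\in[0.5,1)$, $k_{p_j}=\Phi^{-1}(p_j)$; (ii) known first two moments: $p_j\in(0,1)$, $k_{p_j}=\sqrt{p_j/(1-p_j)}$; (iii) unknown second-order moment: $p_j\in(0,1)$, $k_{p_j}=\sqrt{p_j/(1-p_j)}$;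 (iv) unknown moments (proper case): $p_j\in(0,1)$, $k_{p_j}=\sqrt{p_j/(1-p_j)}\sqrt{\zeta_2}+\sqrt{\zeta_1}$ with constants $\zeta_1,\zeta_2\ge0$. Assume there exist $u\in S_1(p_1)$ and $v\in S_2(p_2)$ for which all defining inequality constraints hold strictly. Then the game $G(p)=\max_{u\in S_1(p_1)}\min_{v\in S_2(p_2)}\operatorname{Re}(u^HAv)$ admits a saddle-point equilibrium, i.e. there exists $(u^\star,v^\star)\in S_1(p_1)\times S_2(p_2)$ with $$\operatorname{Re}(u^HAv^\star)\le\operatorname{Re}(u^{\star H}Av^\star)\le\operatorname{Re}(u^{\star H}Av)\qquad\forall(u,v)\in S_1(p_1)\times S_2(p_2).$$
   Context: $\|\cdot\|$ is the Euclidean norm, $^H$ conjugate transpose, $\operatorname{Re}(u)\ge0$ componentwise. The quantities $\tfrac12(u^H\Gamma_Bu+\operatorname{Re}(u^TJ_Bu))$ and $\tfrac12(v^H\Gamma_Dv+\operatorname{Re}(v^TJ_Dv))$ are, by the paper's convention, the variances of $\operatorname{Re}(Bu)$ and $\operatorname{Re}(Dv)$, hence nonnegative (positive semidefinite quadratic forms in $(\operatorname{Re}u,\operatorname{Im}u)$, resp. $(\operatorname{Re}v,\operatorname{Im}v)$). $\Phi^{-1}$ is the inverse cumulative distribution function (quantile function) of the standard complex elliptically symmetric distribution used in the chance-constraint reformulation. A complex elliptically symmetric distribution with mean $\mu$, covariance $\Gamma$, pseudo-covariance $J$ has characteristic function $\exp(i\operatorname{Re}(z^H\mu))\,\psi(z^H\Gamma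 z+\operatorname{Re}(z^HJ\bar z))$ for some generator $\psi$. *)

theory Defs
  imports "HOL-Probability.Probability"
begin

text \<open>Vectors in C^n are complex^'n; an n x m matrix is complex^'m^'n.\<close>

definition lin :: "complex^'n \<Rightarrow> complex^'n \<Rightarrow> complex" where
  "lin mu u = (\<Sum>i\<in>UNIV. mu$i * u$i)"

definition herm_form :: "complex^'n^'n \<Rightarrow> complex^'n \<Rightarrow> complex" where
  "herm_form G u = (\<Sum>i\<in>UNIV. \<Sum>j\<in>UNIV. cnj (u$i) * G$i$j * u$j)"

definition sym_form :: "complex^'n^'n \<Rightarrow> complex^'n \<Rightarrow> complex" where
  "sym_form J u = (\<Sum>i\<in>UNIV. \<Sum>j\<in>UNIV. u$i * J$i$j * u$j)"

definition bilin :: "complex^'n \<Rightarrow> complex^'m^'n \<Rightarrow> complex^'m \<Rightarrow> complex" where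
  "bilin u A v = (\<Sum>i\<in>UNIV. \<Sum>j\<in>UNIV. cnj (u$i) * A$i$j * v$j)"

text \<open>Variance of Re(B u): (1/2)(u^H Gamma u + Re(u^T J u)).\<close>
definition varq :: "complex^'n^'n \<Rightarrow> complex^'n^'n \<Rightarrow> complex^'n \<Rightarrow> real" where
  "varq G J u = (Re (herm_form G u) + Re (sym_form J u)) / 2"

text \<open>(G,J) is a covariance / pseudo-covariance pair of some complex random row
  vector: G Hermitian, J symmetric, and the induced variance form nonnegative
  (equivalently the covariance of (Re B, Im B) is positive semidefinite).\<close>
definition cov_pair :: "complex^'n^'n \<Rightarrow> complex^'n^'n \<Rightarrow> bool" where
  "cov_pair G J \<longleftrightarrow> (\<forall>i j. G$i$j = cnj (G$j$i)) \<and> (\<forall>i j. J$i$j = J$j$i)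
      \<and> (\<forall>u. 0 \<le> varq G J u)"

text \<open>Standard complex elliptically symmetric distribution (mean 0, Gamma = 1, J = 0):
  characteristic function z \<mapsto> psi(|z|^2).\<close>
definition std_CES :: "complex measure \<Rightarrow> bool" where
  "std_CES M \<longleftrightarrow> prob_space M \<and> sets M = sets borel \<and>
     (\<exists>psi :: real \<Rightarrow> complex. \<forall>z. (LINT w|M. cis (Re (cnj z * w))) = psi ((cmod z)\<^sup>2))"

definition CES_cdf :: "complex measure \<Rightarrow> real \<Rightarrow> real" where
  "CES_cdf M x = measure M {w. Re w \<le> x}"

definition CES_quantile :: "complex measure \<Rightarrow> real \<Rightarrow> real" where
  "CES_quantile M p = Inf {x. p \<le> CES_cdf M x}"

text \<open>Admissible pairs (p, k_p) according to cases (i)-(iv); (ii) and (iii) coincide.\<close>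
definition admissible_k :: "real \<Rightarrow> real \<Rightarrow> bool" where
  "admissible_k p k \<longleftrightarrow>
     (\<exists>M. std_CES M \<and> 1/2 \<le> p \<and> p < 1 \<and> k = CES_quantile M p)
   \<or> (0 < p \<and> p < 1 \<and> k = sqrt (p / (1 - p)))
   \<or> (\<exists>z1 z2. 0 \<le> z1 \<and> 0 \<le> z2 \<and> 0 < p \<and> p < 1 \<and>
        k = sqrt (p / (1 - p)) * sqrt z2 + sqrt z1)"

definition simplexU :: "real \<Rightarrow> (complex^'n) set" where
  "simplexU a = {u. norm u \<le> a \<and> (\<forall>i. 0 \<le> Re (u$i)) \<and> (\<Sum>i\<in>UNIV. u$i) = 1}"

definition S1 :: "real \<Rightarrow> complex^'n \<Rightarrow> real \<Rightarrow> complex^'n^'n \<Rightarrow> complex^'n^'n \<Rightarrow> real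
                   \<Rightarrow> (complex^'n) set" where
  "S1 a muB b GB JB k = {u \<in> simplexU a. Re (lin muB u) + k * sqrt (varq GB JB u) \<le> b}"

definition S2 :: "real \<Rightarrow> complex^'m \<Rightarrow> real \<Rightarrow> complex^'m^'m \<Rightarrow> complex^'m^'m \<Rightarrow> real
                   \<Rightarrow> (complex^'m) set" where
  "S2 a muD d GD JD k = {v \<in> simplexU a. Re (lin muD v) - k * sqrt (varq GD JD v) \<ge> d}"

end

theory Submission
  imports Defs
begin

text \<open>The payoff \<open>Re (u\<^sup>H A v)\<close> is bilinear, so by Brouwer's theorem applied to the
  projected-gradient map it has a saddle point on any product of nonempty compact convex sets. For convexity, the square root of the variance
  form is a seminorm, so each chance constraint is a convex sublevel condition as soon as
  \<open>k\<^sub>p \<ge> 0\<close>. In the CES case this holds because the real part of a circularly symmetric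
  variable has a symmetric law that charges every interval around 0, so its quantiles at
  levels \<open>p \<ge> 1/2\<close> are nonnegative.\<close>

lemma quadratic_nonneg_imp_discrim_le:
  fixes a b c :: real
  assumes nonneg: "\<And>t. 0 \<le> a + t * c + t\<^sup>2 * b" and "0 \<le> b"
  shows "c\<^sup>2 \<le> 4 * a * b"
proof (cases "b = 0")
  case True
  have "c = 0"
  proof (rule ccontr)
    assume "c \<noteq> 0"
    with nonneg[of "-(a + 1) / c"] True show False by simp
  qed
  with True show ?thesis by simp
next
  case False
  with \<open>0 \<le> b\<close> have b: "0 < b" by simp
  have "0 \<le> a + (-c / (2 * b)) * c + (-c / (2 * b))\<^sup>2 * b" by (rule nonneg)
  also have "\<dots> = a - c\<^sup>2 / (4 * b)" using b by (simp add: field_simps power2_eq_square)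
  finally show ?thesis using b by (simp add: field_simps)
qed

lemma sqrt_quadratic_triangle:
  fixes q :: "'a::real_vector \<Rightarrow> real"
  assumes nonneg: "\<And>x. 0 \<le> q x"
    and expand: "\<And>x y t. q (x + t *\<^sub>R y) = q x + t * c x y + t\<^sup>2 * q y"
  shows "sqrt (q (x + y)) \<le> sqrt (q x) + sqrt (q y)"
proof -
  have "(c x y)\<^sup>2 \<le> 4 * q x * q y"
    by (rule quadratic_nonneg_imp_discrim_le) (use nonneg expand in metis)+
  also have "\<dots> = (2 * sqrt (q x) * sqrt (q y))\<^sup>2"
    using nonneg by (simp add: power_mult_distrib)
  finally have "c x y \<le> 2 * sqrt (q x) * sqrt (q y)"
    by (rule power2_le_imp_le) (use nonneg in simp)
  then have "q (x + y) \<le> (sqrt (q x) + sqrt (q y))\<^sup>2"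
    using expand[of x 1 y] nonneg by (simp add: power2_eq_square algebra_simps)
  then show ?thesis
    by (simp add: real_le_lsqrt nonneg)
qed

lemma sqrt_quadratic_homogeneous:
  fixes q :: "'a::real_vector \<Rightarrow> real"
  assumes nonneg: "\<And>x. 0 \<le> q x"
    and expand: "\<And>x y t. q (x + t *\<^sub>R y) = q x + t * c x y + t\<^sup>2 * q y"
  shows "sqrt (q (t *\<^sub>R y)) = \<bar>t\<bar> * sqrt (q y)"
proof -
  have "q 0 = 0"
    using expand[of 0 1 0] expand[of 0 "-1" 0] by simp
  moreover have "(c 0 y)\<^sup>2 \<le> 4 * q 0 * q y"
    by (rule quadratic_nonneg_imp_discrim_le) (use nonneg expand in metis)+
  ultimately show ?thesis
    using expand[of 0 t y] by (simp add: real_sqrt_mult)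
qed

lemma convex_on_sqrt_quadratic:
  fixes q :: "'a::real_vector \<Rightarrow> real"
  assumes "\<And>x. 0 \<le> q x"
    and "\<And>x y t. q (x + t *\<^sub>R y) = q x + t * c x y + t\<^sup>2 * q y"
    and "convex S"
  shows "convex_on S (\<lambda>x. sqrt (q x))"
  unfolding convex_on_def
  using assms(3) sqrt_quadratic_triangle[OF assms(1,2)] sqrt_quadratic_homogeneous[OF assms(1,2)]
  by (metis abs_of_nonneg)

lemma convex_sublevel_set:
  assumes "convex_on S f"
  shows "convex {x \<in> S. f x \<le> b}"
proof (rule convexI)
  fix x y and u v :: real
  assume x: "x \<in> {x \<in> S. f x \<le> b}" and y: "y \<in> {x \<in> S. f x \<le> b}"
    and uv: "0 \<le> u" "0 \<le> v" "u + v = 1"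
  have "f (u *\<^sub>R x + v *\<^sub>R y) \<le> u * f x + v * f y"
    using assms x y uv by (simp add: convex_on_def)
  also have "\<dots> \<le> u * b + v * b"
    using x y uv by (intro add_mono mult_left_mono) auto
  finally show "u *\<^sub>R x + v *\<^sub>R y \<in> {x \<in> S. f x \<le> b}"
    using assms x y uv by (simp add: convex_on_def convexD flip: distrib_right)
qed

lemma linear_imp_convex_on:
  assumes "linear f" "convex S"
  shows "convex_on S f"
  using assms by (simp add: convex_on_def linear_add linear_scale)

definition var_form :: "complex^'n^'n \<Rightarrow> complex^'n^'n \<Rightarrow> complex^'n \<Rightarrow> complex^'n \<Rightarrow> real"
  where "var_form G J x y =
    (\<Sum>i\<in>UNIV. \<Sum>j\<in>UNIV. Re (cnj (x$i) * G$i$j * y$j + x$i * J$i$j * y$j)) / 2"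

lemma varq_eq_var_form: "varq G J u = var_form G J u u"
  by (simp add: varq_def var_form_def herm_form_def sym_form_def Re_sum sum.distrib)

lemma varq_add_scaleR:
  "varq G J (x + t *\<^sub>R y)
     = varq G J x + t * (var_form G J x y + var_form G J y x) + t\<^sup>2 * varq G J y"
proof -
  define s where "s u v i j = Re (cnj (u$i) * G$i$j * v$j + u$i * J$i$j * v$j)" for u v i j
  have "s (x + t *\<^sub>R y) (x + t *\<^sub>R y) i j
      = s x x i j + t * (s x y i j + s y x i j) + t\<^sup>2 * s y y i j" for i j
    unfolding s_def vector_add_component vector_scaleR_component
    by (simp add: algebra_simps power2_eq_square)
  then show ?thesis
    unfolding varq_eq_var_form var_form_def s_def[symmetric]
    by (simp add: sum.distrib sum_distrib_left sum_distrib_right field_simps)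
qed

lemma varq_nonneg: "cov_pair G J \<Longrightarrow> 0 \<le> varq G J u"
  by (simp add: cov_pair_def)

lemma convex_on_sqrt_varq:
  assumes "cov_pair G J" "convex S"
  shows "convex_on S (\<lambda>u. sqrt (varq G J u))"
  using convex_on_sqrt_quadratic[OF varq_nonneg[OF assms(1)] varq_add_scaleR assms(2)] .

lemma linear_Re_lin: "linear (\<lambda>u. Re (lin mu u))"
  unfolding lin_def
  by (rule linearI; simp only: vector_add_component vector_scaleR_component)
     (simp_all add: Re_sum sum.distrib sum_distrib_left algebra_simps scaleR_conv_of_real)

lemma convex_simplexU: "convex (simplexU a)"
proof -
  have "simplexU a = cball 0 a \<inter> (\<Inter>i. (\<lambda>u. Re (u$i)) -` {0..}) \<inter> (\<lambda>u. \<Sum>i\<in>UNIV. u$i) -` {1}"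
    by (auto simp: simplexU_def)
  moreover have "linear (\<lambda>u::complex^'n. Re (u$i))" for i
    by (rule linearI) simp_all
  moreover have "linear (\<lambda>u::complex^'n. \<Sum>i\<in>UNIV. u$i)"
    by (rule linearI) (simp_all add: sum.distrib scaleR_sum_right)
  ultimately show ?thesis
    by (metis convex_Int convex_INT convex_linear_vimage convex_cball convex_real_interval(1)
          convex_singleton)
qed

lemma closed_simplexU: "closed (simplexU a)"
  unfolding simplexU_def Collect_conj_eq Collect_all_eq
  by (intro closed_Int closed_INT closed_Collect_le closed_Collect_eq continuous_intros ballI)

lemma S2_eq_S1_uminus: "S2 a mu d G J k = S1 a (- mu) (- d) G J k"
  by (auto simp: S1_def S2_def lin_def sum_negf)

lemma compact_S1: "compact (S1 a mu b G J k)"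
proof -
  have "S1 a mu b G J k = simplexU a \<inter> {u. Re (lin mu u) + k * sqrt (varq G J u) \<le> b}"
    by (auto simp: S1_def)
  also have "closed \<dots>"
    unfolding lin_def varq_def herm_form_def sym_form_def
    by (intro closed_Int closed_simplexU closed_Collect_le continuous_intros) auto
  moreover have "bounded (S1 a mu b G J k)"
    by (auto simp: S1_def simplexU_def bounded_iff)
  ultimately show ?thesis
    by (metis compact_eq_bounded_closed)
qed

lemma convex_S1:
  assumes "cov_pair G J" "0 \<le> k"
  shows "convex (S1 a mu b G J k)"
  unfolding S1_def
  using assms convex_simplexU
  by (intro convex_sublevel_set convex_on_add convex_on_cmul linear_imp_convex_on
        linear_Re_lin convex_on_sqrt_varq)

lemma std_CES_D:
  assumes "std_CES M"
  shows "prob_space M" "sets M = sets borel" "space M = UNIV"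
  using assms sets_eq_imp_space_eq[of M borel] by (auto simp: std_CES_def)

lemma measurable_std_CES:
  assumes "std_CES M" "f \<in> borel_measurable borel"
  shows "f \<in> borel_measurable M"
  using assms(2) measurable_cong_sets[OF std_CES_D(2)[OF assms(1)] refl] by blast

lemma std_CES_distr_Re_cnj_mult_eq:
  assumes "std_CES M" "cmod z1 = cmod z2"
  shows "distr M borel (\<lambda>w. Re (cnj z1 * w)) = distr M borel (\<lambda>w. Re (cnj z2 * w))"
proof -
  obtain psi :: "real \<Rightarrow> complex"
    where psi: "\<And>z. (LINT w|M. cis (Re (cnj z * w))) = psi ((cmod z)\<^sup>2)"
    using assms(1) by (auto simp: std_CES_def)
  interpret prob_space M
    using std_CES_D(1)[OF assms(1)] .
  have meas: "(\<lambda>w. Re (cnj z * w)) \<in> borel_measurable M" for z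
    by (rule measurable_std_CES[OF assms(1)])
       (intro borel_measurable_continuous_onI continuous_intros)
  have "char (distr M borel (\<lambda>w. Re (cnj z * w))) t = psi ((t * cmod z)\<^sup>2)" for z t
  proof -
    have "char (distr M borel (\<lambda>w. Re (cnj z * w))) t = (CLINT w|M. iexp (t * Re (cnj z * w)))"
      unfolding char_def
      by (rule integral_distr[OF meas]) (intro borel_measurable_continuous_onI continuous_intros)
    also have "\<dots> = (CLINT w|M. cis (Re (cnj (of_real t * z) * w)))"
      by (simp add: cis_conv_exp mult.assoc)
    also have "\<dots> = psi ((t * cmod z)\<^sup>2)"
      using psi[of "of_real t * z"] by (simp add: norm_mult power_mult_distrib)
    finally show ?thesis .
  qed
  then show ?thesis
    by (intro Levy_uniqueness) (use meas assms(2) in \<open>auto intro!: real_distribution_distr\<close>)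
qed

lemma std_CES_measure_Re_cnj_mult:
  assumes "std_CES M" "S \<in> sets borel"
  shows "measure M {w. Re (cnj z * w) \<in> S} = measure M {w. cmod z * Re w \<in> S}"
proof -
  have meas: "(\<lambda>w. Re (cnj z * w)) \<in> borel_measurable M" for z
    by (rule measurable_std_CES[OF assms(1)])
       (intro borel_measurable_continuous_onI continuous_intros)
  have "measure M {w. Re (cnj z * w) \<in> S} = measure (distr M borel (\<lambda>w. Re (cnj z * w))) S" for z
    using measure_distr[OF meas assms(2)] std_CES_D(3)[OF assms(1)] by (simp add: vimage_def)
  moreover have "distr M borel (\<lambda>w. Re (cnj z * w))
      = distr M borel (\<lambda>w. Re (cnj (of_real (cmod z)) * w))"
    by (rule std_CES_distr_Re_cnj_mult_eq[OF assms(1)]) simp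
  ultimately have "measure M {w. Re (cnj z * w) \<in> S}
      = measure M {w. Re (cnj (of_real (cmod z)) * w) \<in> S}"
    by metis
  then show ?thesis
    by simp
qed

lemma std_CES_Re_symmetric:
  assumes "std_CES M"
  shows "measure M {w. Re w \<le> x} = measure M {w. - x \<le> Re w}"
  using std_CES_measure_Re_cnj_mult[OF assms, of "{..x}" "-1"] by (auto simp: minus_le_iff)

lemma complex_strips_cover:
  fixes D :: "complex set"
  assumes dense: "\<And>X. open X \<Longrightarrow> X \<noteq> {} \<Longrightarrow> \<exists>d\<in>D. d \<in> X" and "0 < c"
  shows "\<exists>z\<in>D. \<bar>Re (cnj z * w)\<bar> < c * cmod z"
proof -
  let ?X = "{z. \<bar>Re (cnj z * w)\<bar> < c * cmod z}"
  have "open ?X"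
    by (intro open_Collect_less continuous_intros)
  moreover have "(if w = 0 then 1 else \<i> * w) \<in> ?X"
    using \<open>0 < c\<close> by (simp add: norm_mult)
  ultimately show ?thesis
    using dense by blast
qed

text \<open>By rotation invariance every strip through the origin carries the mass of
  \<open>{w. \<bar>Re w\<bar> < c}\<close>, and countably many of them cover the plane.\<close>
lemma std_CES_measure_strip_pos:
  assumes "std_CES M" "0 < c"
  shows "0 < measure M {w. \<bar>Re w\<bar> < c}"
proof (rule ccontr)
  assume "\<not> 0 < measure M {w. \<bar>Re w\<bar> < c}"
  then have null: "measure M {w. \<bar>Re w\<bar> < c} = 0"
    using measure_nonneg[of M "{w. \<bar>Re w\<bar> < c}"] by linarith
  interpret prob_space M
    using std_CES_D(1)[OF assms(1)] .
  have strip_null: "{w. \<bar>Re (cnj z * w)\<bar> < c * cmod z} \<in> null_sets M" for z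
  proof -
    have "measure M {w. \<bar>Re (cnj z * w)\<bar> < c * cmod z}
        = measure M {w. \<bar>cmod z * Re w\<bar> < c * cmod z}"
      using std_CES_measure_Re_cnj_mult[OF assms(1), of "{y. \<bar>y\<bar> < c * cmod z}" z]
      by (simp add: borel_open open_Collect_less continuous_intros)
    also have "\<dots> = 0"
      using null by (cases "z = 0") (simp_all add: abs_mult)
    finally show ?thesis
      using std_CES_D(2)[OF assms(1)]
      by (simp add: null_sets_def emeasure_eq_measure borel_open open_Collect_less continuous_intros)
  qed
  obtain D :: "complex set"
    where "countable D" and dense: "\<And>X. open X \<Longrightarrow> X \<noteq> {} \<Longrightarrow> \<exists>d\<in>D. d \<in> X"
    using countable_dense_exists by blast
  then have "(\<Union>z\<in>D. {w. \<bar>Re (cnj z * w)\<bar> < c * cmod z}) \<in> null_sets M"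
    using strip_null by (intro null_sets_UN')
  moreover have "space M \<subseteq> (\<Union>z\<in>D. {w. \<bar>Re (cnj z * w)\<bar> < c * cmod z})"
    using complex_strips_cover[OF dense assms(2)] by blast
  ultimately have "space M \<in> null_sets M"
    using null_sets_subset by blast
  then show False
    by (simp add: null_sets_def emeasure_space_1)
qed

lemma CES_cdf_neg_less_half:
  assumes "std_CES M" "x < 0"
  shows "CES_cdf M x < 1 / 2"
proof -
  interpret prob_space M
    using std_CES_D(1)[OF assms(1)] .
  define A where "A = {w. Re w \<le> x}"
  define B where "B = {w. \<bar>Re w\<bar> < - x}"
  define C where "C = {w. - x \<le> Re w}"
  have sets: "A \<in> sets M" "B \<in> sets M" "C \<in> sets M"
    unfolding A_def B_def C_def std_CES_D(2)[OF assms(1)]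
    by (intro borel_closed borel_open closed_Collect_le open_Collect_less continuous_intros)+
  have "A \<union> B \<union> C = space M"
    using std_CES_D(3)[OF assms(1)] by (auto simp: A_def B_def C_def)
  then have "1 = measure M (A \<union> B \<union> C)"
    by (metis prob_space)
  also have "\<dots> = measure M (A \<union> B) + measure M C"
    using sets assms(2) by (intro finite_measure_Union) (auto simp: A_def B_def C_def)
  also have "measure M (A \<union> B) = measure M A + measure M B"
    using sets assms(2) by (intro finite_measure_Union) (auto simp: A_def B_def)
  also have "measure M C = measure M A"
    unfolding A_def C_def using std_CES_Re_symmetric[OF assms(1)] by simp
  finally show ?thesis
    using std_CES_measure_strip_pos[OF assms(1), of "- x"] assms(2)
    by (simp add: CES_cdf_def A_def B_def)
qed

lemma CES_quantile_nonneg: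
  assumes "std_CES M" "1 / 2 \<le> p" "p < 1"
  shows "0 \<le> CES_quantile M p"
proof -
  interpret real_distribution "distr M borel Re"
    using std_CES_D(1)[OF assms(1)]
    by (intro prob_space.real_distribution_distr measurable_std_CES[OF assms(1)]) auto
  have cdf_eq: "CES_cdf M x = cdf (distr M borel Re) x" for x
    using std_CES_D(3)[OF assms(1)]
    by (simp add: CES_cdf_def cdf_def measure_distr measurable_std_CES[OF assms(1)] vimage_def)
  have "\<forall>\<^sub>F x in at_top. p < CES_cdf M x"
    unfolding cdf_eq using order_tendstoD(1)[OF cdf_lim_at_top_prob assms(3)] .
  then obtain x0 where "p \<le> CES_cdf M x0"
    by (metis eventually_at_top_linorder less_imp_le order_refl)
  then have "{x. p \<le> CES_cdf M x} \<noteq> {}"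
    by blast
  moreover have "0 \<le> x" if "p \<le> CES_cdf M x" for x
    using CES_cdf_neg_less_half[OF assms(1), of x] assms(2) that by (cases "x < 0") auto
  ultimately show ?thesis
    unfolding CES_quantile_def by (intro cInf_greatest) auto
qed

lemma admissible_k_nonneg: "admissible_k p k \<Longrightarrow> 0 \<le> k"
  unfolding admissible_k_def using CES_quantile_nonneg by auto

text \<open>A fixed point of the map \<open>(u, v) \<mapsto> (\<Pi>\<^sub>S (u + L v), \<Pi>\<^sub>T (v - L\<^sup>* u))\<close>,
  which exists by Brouwer's theorem, satisfies the variational inequalities of a saddle point.\<close>
lemma bilinear_saddle_point_exists:
  fixes S :: "'a::euclidean_space set" and T :: "'b::euclidean_space set" and L :: "'b \<Rightarrow> 'a"
  assumes S: "compact S" "convex S" "S \<noteq> {}" and T: "compact T" "convex T" "T \<noteq> {}"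
    and L: "linear L"
  shows "\<exists>us\<in>S. \<exists>vs\<in>T. \<forall>u\<in>S. \<forall>v\<in>T. u \<bullet> L vs \<le> us \<bullet> L vs \<and> us \<bullet> L vs \<le> us \<bullet> L v"
proof -
  have closed: "closed S" "closed T"
    using S T compact_imp_closed by auto
  define F where "F = (\<lambda>(u, v). (closest_point S (u + L v), closest_point T (v - adjoint L u)))"
  have "continuous_on (S \<times> T) F"
    unfolding F_def case_prod_unfold
    by (intro continuous_intros
          continuous_on_compose2[OF continuous_on_closest_point[OF S(2) closed(1) S(3)], where t=UNIV]
          continuous_on_compose2[OF continuous_on_closest_point[OF T(2) closed(2) T(3)], where t=UNIV]
          linear_continuous_on_compose[OF _ L] linear_continuous_on_compose[OF _ adjoint_linear[OF L]])
       auto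
  moreover have "F \<in> S \<times> T \<rightarrow> S \<times> T"
    unfolding F_def
    using closest_point_in_set[OF closed(1) S(3)] closest_point_in_set[OF closed(2) T(3)] by auto
  ultimately obtain p where p: "p \<in> S \<times> T" "F p = p"
    using brouwer[of "S \<times> T" F] S T by (auto simp: compact_Times convex_Times)
  then obtain us vs where fixpoint: "us \<in> S" "vs \<in> T" "F (us, vs) = (us, vs)"
    by (cases p) auto
  show ?thesis
  proof (intro bexI ballI conjI)
    fix u assume "u \<in> S"
    with fixpoint closest_point_dot[OF S(2) closed(1) this, of "us + L vs"]
    show "u \<bullet> L vs \<le> us \<bullet> L vs"
      by (simp add: F_def inner_diff_right inner_commute)
  next
    fix v assume "v \<in> T"
    with fixpoint closest_point_dot[OF T(2) closed(2) this, of "vs - adjoint L us"]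
    show "us \<bullet> L vs \<le> us \<bullet> L v"
      by (simp add: F_def inner_diff_right adjoint_clauses(2)[OF L])
  qed (use fixpoint in auto)
qed

lemma Re_bilin_eq_inner: "Re (bilin u A v) = u \<bullet> (A *v v)"
proof -
  have "u \<bullet> (A *v v) = (\<Sum>i\<in>UNIV. Re (cnj (u$i) * (A *v v)$i))"
    by (simp add: inner_vec_def inner_complex_def)
  also have "\<dots> = Re (bilin u A v)"
    by (simp only: bilin_def matrix_vector_mult_def vec_lambda_beta sum_distrib_left mult.assoc
          Re_sum)
  finally show ?thesis ..
qed

theorem theorem10:
  fixes A :: "complex^'m^'n"
    and a1 a2 b d p1 p2 k1 k2 :: real
    and muB :: "complex^'n" and muD :: "complex^'m"
    and GB JB :: "complex^'n^'n" and GD JD :: "complex^'m^'m"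
  assumes "a1 \<ge> 1 / sqrt (real CARD('n))" and "a2 \<ge> 1 / sqrt (real CARD('m))"
    and "cov_pair GB JB" and "cov_pair GD JD"
    and "admissible_k p1 k1" and "admissible_k p2 k2"
    and "\<exists>u0. u0 \<in> S1 a1 muB b GB JB k1 \<and> norm u0 < a1 \<and> (\<forall>i. 0 < Re (u0$i))
              \<and> Re (lin muB u0) + k1 * sqrt (varq GB JB u0) < b"
    and "\<exists>v0. v0 \<in> S2 a2 muD d GD JD k2 \<and> norm v0 < a2 \<and> (\<forall>i. 0 < Re (v0$i))
              \<and> Re (lin muD v0) - k2 * sqrt (varq GD JD v0) > d"
  shows "\<exists>us \<in> S1 a1 muB b GB JB k1. \<exists>vs \<in> S2 a2 muD d GD JD k2.
           \<forall>u \<in> S1 a1 muB b GB JB k1. \<forall>v \<in> S2 a2 muD d GD JD k2.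
             Re (bilin u A vs) \<le> Re (bilin us A vs) \<and> Re (bilin us A vs) \<le> Re (bilin us A v)"
proof -
  have "convex (S1 a1 muB b GB JB k1)" "convex (S2 a2 muD d GD JD k2)"
    using assms(3-6) by (simp_all add: S2_eq_S1_uminus convex_S1 admissible_k_nonneg)
  moreover have "compact (S1 a1 muB b GB JB k1)" "compact (S2 a2 muD d GD JD k2)"
    by (simp_all add: S2_eq_S1_uminus compact_S1)
  moreover have "S1 a1 muB b GB JB k1 \<noteq> {}" "S2 a2 muD d GD JD k2 \<noteq> {}"
    using assms(7,8) by blast+
  ultimately show ?thesis
    unfolding Re_bilin_eq_inner
    by (intro bilinear_saddle_point_exists matrix_vector_mul_linear)
qed

end
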